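(* Let $T$ be any shortest-path tree of $G$ rooted at $s$, let $R$ be the forest obtained from $T$ by deleting the edges in $E(T)\cap E(D)$ (so $V(R)=V$), and let $\widetilde{E}$ be the set of edges $\{x,y\}\in E\setminus(E(T)\cup E(D))$ such that $x$ and $y$ lie in different connected components (subtrees) of $R$. Then an optimal outward path contains an edge of $\widetilde{E}$.
   Context: $G=(V,E,w)$ is a simple, connected, undirected graph with positive edge lengths, $s,t\in V$. A path is always simple; an $st$-path is a simple path from $s$ to $t$, and its length is the sum of its edge lengths. $D$ is the subgraph formed by the union of all shortest $st$-paths of $G$. An optimal outward path is an $st$-path of minimum length among all $st$-paths containing at least one edge of $E\setminus E(D)$. *)

theory Defs
  imports Complex_Main
begin

definition simple_graph :: "'a set \<Rightarrow> 'a set set \<Rightarrow> bool" where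
  "simple_graph V E \<longleftrightarrow> finite V \<and>
     (\<forall>e\<in>E. \<exists>x y. x \<noteq> y \<and> x \<in> V \<and> y \<in> V \<and> e = {x, y})"

definition is_path :: "'a set \<Rightarrow> 'a set set \<Rightarrow> 'a list \<Rightarrow> bool" where
  "is_path V F p \<longleftrightarrow> p \<noteq> [] \<and> distinct p \<and> set p \<subseteq> V \<and>
     (\<forall>i. Suc i < length p \<longrightarrow> {p ! i, p ! Suc i} \<in> F)"

definition path_between :: "'a set \<Rightarrow> 'a set set \<Rightarrow> 'a \<Rightarrow> 'a \<Rightarrow> 'a list \<Rightarrow> bool" where
  "path_between V F u v p \<longleftrightarrow> is_path V F p \<and> hd p = u \<and> last p = v"

definition path_edge_list :: "'a list \<Rightarrow> 'a set list" where
  "path_edge_list p = map (\<lambda>i. {p ! i, p ! Suc i}) [0..<length p - 1]"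

definition path_edges :: "'a list \<Rightarrow> 'a set set" where
  "path_edges p = set (path_edge_list p)"

definition path_len :: "('a set \<Rightarrow> real) \<Rightarrow> 'a list \<Rightarrow> real" where
  "path_len w p = sum_list (map w (path_edge_list p))"

definition connected_graph :: "'a set \<Rightarrow> 'a set set \<Rightarrow> bool" where
  "connected_graph V F \<longleftrightarrow> (\<forall>u\<in>V. \<forall>v\<in>V. \<exists>p. path_between V F u v p)"

definition shortest_path :: "'a set \<Rightarrow> 'a set set \<Rightarrow> ('a set \<Rightarrow> real) \<Rightarrow> 'a \<Rightarrow> 'a \<Rightarrow> 'a list \<Rightarrow> bool" where
  "shortest_path V E w u v p \<longleftrightarrow> path_between V E u v p \<and>
     (\<forall>q. path_between V E u v q \<longrightarrow> path_len w p \<le> path_len w q)"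

definition D_edges :: "'a set \<Rightarrow> 'a set set \<Rightarrow> ('a set \<Rightarrow> real) \<Rightarrow> 'a \<Rightarrow> 'a \<Rightarrow> 'a set set" where
  "D_edges V E w s t = (\<Union>{path_edges p |p. shortest_path V E w s t p})"

definition spanning_tree :: "'a set \<Rightarrow> 'a set set \<Rightarrow> 'a set set \<Rightarrow> bool" where
  "spanning_tree V E T \<longleftrightarrow> T \<subseteq> E \<and>
     (\<forall>u\<in>V. \<forall>v\<in>V. \<exists>!p. path_between V T u v p)"

definition shortest_path_tree :: "'a set \<Rightarrow> 'a set set \<Rightarrow> ('a set \<Rightarrow> real) \<Rightarrow> 'a \<Rightarrow> 'a set set \<Rightarrow> bool" where
  "shortest_path_tree V E w s T \<longleftrightarrow> s \<in> V \<and> spanning_tree V E T \<and>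
     (\<forall>v\<in>V. \<forall>p. path_between V T s v p \<longrightarrow> shortest_path V E w s v p)"

definition outward_path :: "'a set \<Rightarrow> 'a set set \<Rightarrow> ('a set \<Rightarrow> real) \<Rightarrow> 'a \<Rightarrow> 'a \<Rightarrow> 'a list \<Rightarrow> bool" where
  "outward_path V E w s t p \<longleftrightarrow> path_between V E s t p \<and>
     path_edges p \<inter> (E - D_edges V E w s t) \<noteq> {}"

definition optimal_outward_path :: "'a set \<Rightarrow> 'a set set \<Rightarrow> ('a set \<Rightarrow> real) \<Rightarrow> 'a \<Rightarrow> 'a \<Rightarrow> 'a list \<Rightarrow> bool" where
  "optimal_outward_path V E w s t p \<longleftrightarrow> outward_path V E w s t p \<and>
     (\<forall>q. outward_path V E w s t q \<longrightarrow> path_len w p \<le> path_len w q)"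

text \<open>The forest R = (V, T - E(D)); x and y are in the same component iff joined by a path.\<close>
definition forest_R :: "'a set \<Rightarrow> 'a set set \<Rightarrow> ('a set \<Rightarrow> real) \<Rightarrow> 'a \<Rightarrow> 'a \<Rightarrow> 'a set set \<Rightarrow> 'a set set" where
  "forest_R V E w s t T = T - (T \<inter> D_edges V E w s t)"

definition E_tilde :: "'a set \<Rightarrow> 'a set set \<Rightarrow> ('a set \<Rightarrow> real) \<Rightarrow> 'a \<Rightarrow> 'a \<Rightarrow> 'a set set \<Rightarrow> 'a set set" where
  "E_tilde V E w s t T = {e \<in> E - (T \<union> D_edges V E w s t).
     \<exists>x y. e = {x, y} \<and> \<not> (\<exists>p. path_between V (forest_R V E w s t T) x y p)}"

end

theory Submission
  imports Defs
begin

text \<open>Let X be the set of vertices on shortest st-paths; the edges of D join vertices of X. The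
  tree path from s to a vertex v of X is a shortest s-v path, and continuing it along a shortest
  st-path through v gives a shortest st-path, so tree paths to X stay in D. Hence distinct vertices
  of X lie in different components of R. An outward path runs from s to t, both in X, and each of
  its edges outside D but not in E_tilde joins two vertices of one component of R. Following the
  path from the last vertex of X before an edge outside D to the next vertex of X, all edges on
  the way lie outside D, so without an edge of E_tilde the two ends of this stretch would be
  distinct vertices of X in one component of R.\<close>

lemma path_edge_list_Nil [simp]: "path_edge_list [] = []"
  by (simp add: path_edge_list_def)

lemma path_edge_list_singleton [simp]: "path_edge_list [a] = []"
  by (simp add: path_edge_list_def)

lemma path_edge_list_Cons_Cons [simp]:
  "path_edge_list (a # b # xs) = {a, b} # path_edge_list (b # xs)"
  unfolding path_edge_list_def
  by (simp add: upt_conv_Cons map_Suc_upt[symmetric] del: upt_Suc)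

lemma path_edge_list_append:
  "path_edge_list (xs @ y # ys) = path_edge_list (xs @ [y]) @ path_edge_list (y # ys)"
proof (induction xs)
  case (Cons a xs)
  then show ?case
    by (cases xs) simp_all
qed simp

lemma path_edges_Nil [simp]: "path_edges [] = {}"
  by (simp add: path_edges_def)

lemma path_edges_singleton [simp]: "path_edges [a] = {}"
  by (simp add: path_edges_def)

lemma path_edges_Cons_Cons [simp]:
  "path_edges (a # b # xs) = insert {a, b} (path_edges (b # xs))"
  by (simp add: path_edges_def)

lemma path_edges_append:
  "path_edges (xs @ y # ys) = path_edges (xs @ [y]) \<union> path_edges (y # ys)"
  unfolding path_edges_def by (subst path_edge_list_append) simp

lemma path_len_Cons_Cons [simp]: "path_len w (a # b # xs) = w {a, b} + path_len w (b # xs)"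
  by (simp add: path_len_def)

lemma path_len_append:
  "path_len w (xs @ y # ys) = path_len w (xs @ [y]) + path_len w (y # ys)"
  unfolding path_len_def by (subst path_edge_list_append) simp

lemma path_edges_conv: "path_edges p = {{p ! i, p ! Suc i} |i. Suc i < length p}"
  unfolding path_edges_def path_edge_list_def by auto

lemma mem_path_edges_imp_mem_set: "e \<in> path_edges p \<Longrightarrow> u \<in> e \<Longrightarrow> u \<in> set p"
  unfolding path_edges_conv by auto

lemma path_edges_rev: "path_edges (rev p) = path_edges p"
proof (induction p rule: induct_list012)
  case (3 a b p)
  have "path_edges (rev (a # b # p)) = path_edges (rev p @ [b]) \<union> path_edges [b, a]"
    using path_edges_append[of "rev p" b "[a]"] by simp
  with 3 show ?case by (auto simp: insert_commute)
qed simp_all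

lemma is_path_iff:
  "is_path V F p \<longleftrightarrow> p \<noteq> [] \<and> distinct p \<and> set p \<subseteq> V \<and> path_edges p \<subseteq> F"
  unfolding is_path_def path_edges_conv by blast

lemma path_len_nonneg:
  "path_edges p \<subseteq> E \<Longrightarrow> \<forall>e\<in>E. 0 < w e \<Longrightarrow> 0 \<le> path_len w p"
  unfolding path_len_def path_edges_def by (rule sum_list_nonneg) (auto intro: less_imp_le)

lemma path_len_pos:
  assumes "path_edges p \<subseteq> E" "\<forall>e\<in>E. 0 < w e" "p \<noteq> []" "hd p \<noteq> last p"
  shows "0 < path_len w p"
proof -
  obtain a b xs where p: "p = a # b # xs"
    using assms(3,4) by (cases p) (auto simp: neq_Nil_conv split: if_split_asm)
  have "0 \<le> path_len w (b # xs)"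
    using assms(1,2) p by (intro path_len_nonneg[of _ E]) auto
  moreover have "0 < w {a, b}" using assms(1,2) p by auto
  ultimately show ?thesis using p by simp
qed

lemma path_between_rev: "path_between V F u v p \<Longrightarrow> path_between V F v u (rev p)"
  unfolding path_between_def is_path_iff by (simp add: path_edges_rev hd_rev last_rev)

lemma path_between_endpoints: "path_between V F u v p \<Longrightarrow> u \<in> set p \<and> v \<in> set p"
  unfolding path_between_def is_path_iff by auto

lemma path_between_split:
  assumes "path_between V F x y (A @ z # B)"
  shows "path_between V F x z (A @ [z])" and "path_between V F z y (z # B)"
  using assms path_edges_append[of A z B]
  unfolding path_between_def is_path_iff by (auto simp: hd_append)

lemma path_between_join:
  assumes "path_between V F x z (A @ [z])" "path_between V F z y (z # B)" "set A \<inter> set B = {}"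
  shows "path_between V F x y (A @ z # B)"
  using assms path_edges_append[of A z B]
  unfolding path_between_def is_path_iff by (auto simp: hd_append)

definition reachable :: "'a set \<Rightarrow> 'a set set \<Rightarrow> 'a \<Rightarrow> 'a \<Rightarrow> bool" where
  "reachable V F x y \<longleftrightarrow> (\<exists>p. path_between V F x y p)"

lemma reachable_edge: "{x, y} \<in> F \<Longrightarrow> x \<noteq> y \<Longrightarrow> x \<in> V \<Longrightarrow> y \<in> V \<Longrightarrow> reachable V F x y"
  unfolding reachable_def path_between_def is_path_iff
  by (rule exI[of _ "[x, y]"]) simp

lemma transp_reachable: "transp (reachable V F)"
proof (rule transpI)
  fix x y z
  assume "reachable V F x y" "reachable V F y z"
  then obtain p q where p: "path_between V F x y p" and q: "path_between V F y z q"
    unfolding reachable_def by blast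
  then have "y \<in> set p" "y \<in> set q"
    using path_between_endpoints by meson+
  then obtain A u B where pAB: "p = A @ u # B" and "u \<in> set q" and A: "\<forall>a\<in>set A. a \<notin> set q"
    using split_list_first_prop[of p "\<lambda>u. u \<in> set q"] by blast
  then obtain C D where qCD: "q = C @ u # D"
    by (meson split_list)
  have "set A \<inter> set D = {}" using A qCD by auto
  then have "path_between V F x z (A @ u # D)"
    using path_between_split(1)[OF p[unfolded pAB]] path_between_split(2)[OF q[unfolded qCD]]
    by (rule path_between_join[rotated 2])
  then show "reachable V F x z" unfolding reachable_def by blast
qed

lemma spanning_tree_path_unique:
  "spanning_tree V E T \<Longrightarrow> u \<in> V \<Longrightarrow> v \<in> V \<Longrightarrow>
    path_between V T u v p \<Longrightarrow> path_between V T u v q \<Longrightarrow> p = q"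
  unfolding spanning_tree_def by blast

text \<open>Px up to its last common vertex z with Q, followed by Q from z, is a T-path from s to y;
  unless z = y, its edge leaving z lies in T - D.\<close>

lemma path_passes_through_target:
  assumes tree_path_y: "\<forall>p. path_between V T s y p \<longrightarrow> path_edges p \<subseteq> D"
    and Q: "path_between V (T - D) x y Q"
    and Px: "path_between V T s x Px"
  shows "y \<in> set Px"
proof -
  have "x \<in> set Q" "x \<in> set Px"
    using Q Px path_between_endpoints by meson+
  then obtain Q1 z Q2 where Q_split: "Q = Q1 @ z # Q2" and "z \<in> set Px"
    and Q2: "\<forall>u\<in>set Q2. u \<notin> set Px"
    using split_list_last_prop[of Q "\<lambda>u. u \<in> set Px"] by blast
  then obtain A B where Px_split: "Px = A @ z # B"
    by (meson split_list)
  show ?thesis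
  proof (cases Q2)
    case Nil
    then show ?thesis
      using Q Q_split \<open>z \<in> set Px\<close> unfolding path_between_def by simp
  next
    case (Cons b Q2')
    have detour: "path_between V (T - D) z y (z # Q2)"
      using path_between_split(2)[OF Q[unfolded Q_split]] .
    then have "path_between V T z y (z # Q2)"
      unfolding path_between_def is_path_iff by blast
    moreover have "set A \<inter> set Q2 = {}" using Q2 Px_split by auto
    ultimately have "path_between V T s y (A @ z # Q2)"
      using path_between_join[OF path_between_split(1)[OF Px[unfolded Px_split]]] by blast
    then have "{z, b} \<in> D"
      using tree_path_y Cons path_edges_append[of A z Q2] by auto
    moreover have "{z, b} \<in> T - D"
      using detour Cons unfolding path_between_def is_path_iff by auto
    ultimately show ?thesis by blast
  qed
qed

text \<open>Applying the previous lemma in both directions puts each of x and y on the tree path to the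
  other, so each of these tree paths is a proper prefix of the other.\<close>

lemma spanning_tree_separates:
  assumes tree: "spanning_tree V E T" and s: "s \<in> V" and X: "X \<subseteq> V"
    and tree_paths: "\<forall>v\<in>X. \<forall>p. path_between V T s v p \<longrightarrow> path_edges p \<subseteq> D"
    and "x \<in> X" "y \<in> X" "x \<noteq> y"
  shows "\<not> reachable V (T - D) x y"
proof
  assume "reachable V (T - D) x y"
  then obtain Q where Q: "path_between V (T - D) x y Q" unfolding reachable_def by blast
  have xy: "x \<in> V" "y \<in> V" using X \<open>x \<in> X\<close> \<open>y \<in> X\<close> by auto
  obtain Px Py where Px: "path_between V T s x Px" and Py: "path_between V T s y Py"
    using tree s xy unfolding spanning_tree_def by blast
  have "y \<in> set Px"
    using path_passes_through_target[OF _ Q Px] tree_paths \<open>y \<in> X\<close> by blast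
  then obtain A B where Px_split: "Px = A @ y # B"
    by (meson split_list)
  have "x \<in> set Py"
    using path_passes_through_target[OF _ path_between_rev[OF Q] Py]
      tree_paths \<open>x \<in> X\<close> by blast
  moreover have "A @ [y] = Py"
    using spanning_tree_path_unique[OF tree s xy(2) path_between_split(1) Py] Px[unfolded Px_split]
    by blast
  ultimately have "x \<in> set A" using \<open>x \<noteq> y\<close> by auto
  moreover have "x \<in> set (y # B)"
    using Px Px_split unfolding path_between_def by (metis last_appendR last_in_set list.distinct(1))
  ultimately show False
    using Px Px_split unfolding path_between_def is_path_iff by auto
qed

text \<open>A vertex x shared by p and b would give the st-path "p up to x, then q from x", which is
  shorter than q because the part of q up to v is at least as long as p.\<close>

lemma shortest_path_disjoint_suffix:
  assumes pos: "\<forall>e\<in>E. 0 < w e"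
    and p: "shortest_path V E w s v (p' @ [v])"
    and q: "shortest_path V E w s t (a @ v # b)"
  shows "set p' \<inter> set b = {}"
proof (rule ccontr)
  assume "set p' \<inter> set b \<noteq> {}"
  then obtain p1 x p2 where p_split: "p' @ [v] = p1 @ x # p2" and "x \<in> set b"
    and p1: "\<forall>u\<in>set p1. u \<notin> set b"
    using split_list_first_prop[of "p' @ [v]" "\<lambda>u. u \<in> set b"] by auto
  then obtain b1 b2 where b_split: "b = b1 @ x # b2"
    by (meson split_list)
  have p_path: "path_between V E s v (p1 @ x # p2)"
    using p p_split unfolding shortest_path_def by simp
  have q_path: "path_between V E s t (a @ v # b1 @ x # b2)"
    using q b_split unfolding shortest_path_def by simp
  have "v \<notin> set b" using q_path b_split unfolding path_between_def is_path_iff by simp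
  moreover have "last (x # p2) = v"
    using p_split by (metis last_snoc last_appendR list.distinct(1))
  ultimately have "hd (x # p2) \<noteq> last (x # p2)"
    using \<open>x \<in> set b\<close> by auto
  moreover have "path_edges (x # p2) \<subseteq> E"
    using path_between_split(2)[OF p_path] unfolding path_between_def is_path_iff by blast
  ultimately have detour_pos: "0 < path_len w (x # p2)"
    using pos by (intro path_len_pos) auto
  have "path_between V E v x ((v # b1) @ [x])"
    using path_between_split(1)[of V E v t "v # b1" x b2] path_between_split(2)[OF q_path] by simp
  then have shortcut_nonneg: "0 \<le> path_len w ((v # b1) @ [x])"
    using pos unfolding path_between_def is_path_iff by (auto intro: path_len_nonneg)
  have "path_between V E s v (a @ [v])"
    using path_between_split(1)[OF q_path] .
  then have p_le: "path_len w (p1 @ x # p2) \<le> path_len w (a @ [v])"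
    using p unfolding shortest_path_def p_split by blast
  have "set p1 \<inter> set b2 = {}" using p1 b_split by auto
  then have "path_between V E s t (p1 @ x # b2)"
    using path_between_join[OF path_between_split(1)[OF p_path]]
      path_between_split(2)[of V E s t "a @ v # b1" x b2] q_path by simp
  then have q_le: "path_len w (a @ v # b1 @ x # b2) \<le> path_len w (p1 @ x # b2)"
    using q unfolding shortest_path_def b_split by blast
  have "path_len w (a @ v # b1 @ x # b2)
      = path_len w (a @ [v]) + path_len w ((v # b1) @ [x]) + path_len w (x # b2)"
    using path_len_append[of w a v "b1 @ x # b2"] path_len_append[of w "v # b1" x b2] by simp
  then show False
    using detour_pos shortcut_nonneg p_le q_le
      path_len_append[of w p1 x b2] path_len_append[of w p1 x p2] by linarith
qed

text \<open>Appending to a shortest s-v path the part of a shortest s-t path behind v gives again a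
  shortest s-t path.\<close>

lemma shortest_path_edges_subset_D_edges:
  assumes pos: "\<forall>e\<in>E. 0 < w e"
    and p: "shortest_path V E w s v p" and q: "shortest_path V E w s t q" and "v \<in> set q"
  shows "path_edges p \<subseteq> D_edges V E w s t"
proof -
  obtain a b where q_split: "q = a @ v # b"
    using \<open>v \<in> set q\<close> by (meson split_list)
  obtain p' where p_snoc: "p = p' @ [v]"
    using p unfolding shortest_path_def path_between_def is_path_iff
    by (metis append_butlast_last_id)
  have "set p' \<inter> set b = {}"
    using shortest_path_disjoint_suffix[OF pos] p q unfolding q_split p_snoc by blast
  then have r: "path_between V E s t (p' @ v # b)"
    using p q path_between_split(2)[of V E s t a v b] q_split p_snoc
    unfolding shortest_path_def by (blast intro: path_between_join)
  have "path_between V E s v (a @ [v])"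
    using path_between_split(1)[of V E s t a v b] q unfolding shortest_path_def q_split by blast
  then have "path_len w p \<le> path_len w (a @ [v])"
    using p unfolding shortest_path_def by blast
  then have "path_len w (p' @ v # b) \<le> path_len w q"
    using path_len_append[of w p' v b] path_len_append[of w a v b] p_snoc q_split by simp
  then have "shortest_path V E w s t (p' @ v # b)"
    using r q unfolding shortest_path_def by fastforce
  moreover have "path_edges p \<subseteq> path_edges (p' @ v # b)"
    using path_edges_append[of p' v b] p_snoc by simp
  ultimately show ?thesis unfolding D_edges_def by blast
qed

text \<open>Here a is the last vertex of X visited before L: the conn-steps taken since then compose
  until X is reached again.\<close>

lemma connected_pair_along_walk_from:
  assumes "transp conn"
  shows "L \<noteq> [] \<Longrightarrow> distinct L \<Longrightarrow> last L \<in> X \<Longrightarrow>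
    \<forall>c d. {c, d} \<in> path_edges L \<longrightarrow> conn c d \<or> c \<in> X \<and> d \<in> X \<Longrightarrow>
    a \<in> X \<Longrightarrow> a \<notin> set L \<Longrightarrow> conn a (hd L) \<Longrightarrow> \<exists>x\<in>X. \<exists>y\<in>X. x \<noteq> y \<and> conn x y"
proof (induction L arbitrary: a rule: induct_list012)
  case (2 c)
  then show ?case by auto
next
  case (3 c d L)
  show ?case
  proof (cases "conn c d")
    case True
    then have "conn a d" using \<open>conn a (hd (c # d # L))\<close> \<open>transp conn\<close> by (auto dest: transpD)
    with 3 show ?thesis by auto
  next
    case False
    then show ?thesis using "3.prems" by auto
  qed
qed simp

lemma connected_pair_along_walk:
  assumes "transp conn"
  shows "distinct L \<Longrightarrow> hd L \<in> X \<Longrightarrow> last L \<in> X \<Longrightarrow>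
    \<forall>c d. {c, d} \<in> path_edges L \<longrightarrow> conn c d \<or> c \<in> X \<and> d \<in> X \<Longrightarrow>
    {c, d} \<in> path_edges L \<Longrightarrow> conn c d \<Longrightarrow> \<exists>x\<in>X. \<exists>y\<in>X. x \<noteq> y \<and> conn x y"
proof (induction L rule: induct_list012)
  case (3 a b L)
  show ?case
  proof (cases "conn a b")
    case True
    then show ?thesis
      using connected_pair_along_walk_from[OF assms, of "b # L" X a] "3.prems" by auto
  next
    case False
    then have ab: "a \<in> X" "b \<in> X" using "3.prems"(4) by auto
    show ?thesis
    proof (cases "{c, d} = {a, b}")
      case True
      then have "c \<in> X" "d \<in> X" "c \<noteq> d"
        using ab "3.prems"(1) by (auto simp: doubleton_eq_iff)
      with \<open>conn c d\<close> show ?thesis by blast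
    next
      case False
      then show ?thesis using "3.IH"(2) "3.prems" ab by auto
    qed
  qed
qed simp_all

definition D_vertices :: "'a set \<Rightarrow> 'a set set \<Rightarrow> ('a set \<Rightarrow> real) \<Rightarrow> 'a \<Rightarrow> 'a \<Rightarrow> 'a set" where
  "D_vertices V E w s t = {v. \<exists>q. shortest_path V E w s t q \<and> v \<in> set q}"

lemma D_edges_endpoints:
  "{c, d} \<in> D_edges V E w s t \<Longrightarrow> c \<in> D_vertices V E w s t \<and> d \<in> D_vertices V E w s t"
  unfolding D_edges_def D_vertices_def by (blast dest: mem_path_edges_imp_mem_set)

lemma D_vertices_subset: "D_vertices V E w s t \<subseteq> V"
  unfolding D_vertices_def shortest_path_def path_between_def is_path_iff by blast

lemma forest_R_eq: "forest_R V E w s t T = T - D_edges V E w s t"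
  unfolding forest_R_def by blast

lemma endpoints_in_D_vertices:
  assumes spt: "shortest_path_tree V E w s T" and "t \<in> V"
  shows "s \<in> D_vertices V E w s t" and "t \<in> D_vertices V E w s t"
proof -
  have "s \<in> V" and "spanning_tree V E T"
    using spt unfolding shortest_path_tree_def by blast+
  then obtain p where p: "path_between V T s t p"
    using \<open>t \<in> V\<close> unfolding spanning_tree_def by blast
  then have "shortest_path V E w s t p"
    using spt \<open>t \<in> V\<close> unfolding shortest_path_tree_def by blast
  then show "s \<in> D_vertices V E w s t" and "t \<in> D_vertices V E w s t"
    using path_between_endpoints[OF p] unfolding D_vertices_def by blast+
qed

lemma shortest_path_tree_path_in_D_edges:
  assumes pos: "\<forall>e\<in>E. 0 < w e" and spt: "shortest_path_tree V E w s T"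
    and v: "v \<in> D_vertices V E w s t" and p: "path_between V T s v p"
  shows "path_edges p \<subseteq> D_edges V E w s t"
proof -
  obtain q where q: "shortest_path V E w s t q" and "v \<in> set q"
    using v unfolding D_vertices_def by blast
  have "v \<in> V" using D_vertices_subset v by (rule subsetD)
  then have "shortest_path V E w s v p"
    using spt p unfolding shortest_path_tree_def by blast
  then show ?thesis
    using shortest_path_edges_subset_D_edges[OF pos _ q \<open>v \<in> set q\<close>] by blast
qed

lemma D_vertices_separated:
  assumes pos: "\<forall>e\<in>E. 0 < w e" and spt: "shortest_path_tree V E w s T"
    and "x \<in> D_vertices V E w s t" "y \<in> D_vertices V E w s t" "x \<noteq> y"
  shows "\<not> reachable V (forest_R V E w s t T) x y"
proof -
  have tree: "spanning_tree V E T" and "s \<in> V"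
    using spt unfolding shortest_path_tree_def by blast+
  have "\<forall>v\<in>D_vertices V E w s t. \<forall>p. path_between V T s v p \<longrightarrow> path_edges p \<subseteq> D_edges V E w s t"
    using shortest_path_tree_path_in_D_edges[OF pos spt] by blast
  then show ?thesis
    unfolding forest_R_eq
    by (rule spanning_tree_separates[OF tree \<open>s \<in> V\<close> D_vertices_subset _ assms(3-5)])
qed

lemma reachable_if_not_in_E_tilde:
  assumes graph: "simple_graph V E" and "{c, d} \<in> E" and "{c, d} \<notin> D_edges V E w s t"
    and "{c, d} \<notin> E_tilde V E w s t T"
  shows "reachable V (forest_R V E w s t T) c d"
proof (cases "{c, d} \<in> T")
  case True
  have "c \<noteq> d" "c \<in> V" "d \<in> V"
    using graph \<open>{c, d} \<in> E\<close> unfolding simple_graph_def by (auto simp: doubleton_eq_iff)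
  moreover have "{c, d} \<in> forest_R V E w s t T"
    using True assms(3) unfolding forest_R_eq by blast
  ultimately show ?thesis by (simp add: reachable_edge)
next
  case False
  then have "{c, d} \<in> E - (T \<union> D_edges V E w s t)" using assms(2,3) by blast
  then show ?thesis using assms(4) unfolding E_tilde_def reachable_def by blast
qed

theorem outward_path_meets_E_tilde:
  assumes graph: "simple_graph V E" and pos: "\<forall>e\<in>E. 0 < w e" and "t \<in> V"
    and spt: "shortest_path_tree V E w s T" and P: "outward_path V E w s t P"
  shows "path_edges P \<inter> E_tilde V E w s t T \<noteq> {}"
proof
  assume no_E_tilde: "path_edges P \<inter> E_tilde V E w s t T = {}"
  define X where "X = D_vertices V E w s t"
  define conn where "conn = reachable V (forest_R V E w s t T)"
  have P_path: "path_between V E s t P"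
    using P unfolding outward_path_def by blast
  have non_D_edge: "conn c d" if "{c, d} \<in> path_edges P" "{c, d} \<notin> D_edges V E w s t" for c d
    using reachable_if_not_in_E_tilde[OF graph _ that(2)] P_path that(1) no_E_tilde
    unfolding conn_def path_between_def is_path_iff by blast
  obtain e where "e \<in> path_edges P" "e \<notin> D_edges V E w s t"
    using P unfolding outward_path_def by blast
  then obtain c d where cd: "{c, d} \<in> path_edges P" "{c, d} \<notin> D_edges V E w s t"
    unfolding path_edges_conv by blast
  have steps: "\<forall>c d. {c, d} \<in> path_edges P \<longrightarrow> conn c d \<or> c \<in> X \<and> d \<in> X"
    using non_D_edge D_edges_endpoints[of _ _ V E w s t] unfolding X_def by blast
  have "distinct P" "hd P \<in> X" "last P \<in> X"
    using P_path endpoints_in_D_vertices[OF spt \<open>t \<in> V\<close>]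
    unfolding X_def path_between_def is_path_iff by auto
  from connected_pair_along_walk[OF transp_reachable[of V "forest_R V E w s t T", folded conn_def],
      OF this steps cd(1) non_D_edge[OF cd]]
  obtain x y where "x \<in> X" "y \<in> X" "x \<noteq> y" "conn x y" by blast
  then show False
    using D_vertices_separated[OF pos spt] unfolding X_def conn_def by blast
qed

theorem lemma12:
  fixes V :: "'a set" and E :: "'a set set" and w :: "'a set \<Rightarrow> real" and s t :: 'a
    and T :: "'a set set" and P :: "'a list"
  assumes "simple_graph V E"
    and "connected_graph V E"
    and "\<forall>e\<in>E. w e > 0"
    and "s \<in> V" and "t \<in> V"
    and "shortest_path_tree V E w s T"
    and "optimal_outward_path V E w s t P"
  shows "path_edges P \<inter> E_tilde V E w s t T \<noteq> {}"
  using outward_path_meets_E_tilde[OF assms(1,3,5,6)] assms(7)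
  unfolding optimal_outward_path_def by blast

end
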